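(* Let $T$ be a power-bounded continuous linear operator on a Fréchet space $X$ with a translation-invariant metric $d$ inducing its topology. (1) If $T$ is recurrent, then $T$ is invertible, $T^{-1}$ is power-bounded and recurrent, and $T$ is an isometry for the metric $d_T^*(x,y)=\sup_{\ell\ge0}d(T^\ell x,T^\ell y)$. (2) If $T$ is hyper-recurrent, then $\mathrm{Hr}(T)=\mathrm{Hr}(T^{-1})$ and $T^{-1}$ is hyper-recurrent.
   Context: $T$ is power-bounded if every orbit $\{T^nx:n\in\mathbb{N}\}$ is bounded in the topological vector space sense (for every neighbourhood $U$ of $0$ there is $r>0$ with the orbit contained in $zU$ whenever $|z|\ge r$). $x$ is recurrent if $T^{\omega_n}x\to x$ for some strictly increasing sequence $(\omega_n)$ of positive integers; $\mathrm{Rec}(T)$ is the set of recurrent vectors and $T$ is recurrent if $\mathrm{Rec}(T)$ is dense. $\mathfrak{C}$ is the set of strictly increasing sequences $\omega$ with $T^{\omega_n}x\to x$ for some $x\ne0$; $\mathfrak{L}(\omega)=\{x:T^{\omega_n}x\to x\}$. $\mathrm{Hr}(T)$ is the set of $x\in\mathrm{Rec}(T)$ such that $\mathfrak{L}(\omega)$ is dense for every $\omega\in\mathfrak{C}$ with $x\in\mathfrak{L}(\omega)$; a recurrent $T$ is hyper-recurrent if $\mathrm{Hr}(T)\ne\emptyset$. The same notions are used for $T^{-1}$. *)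

theory Defs
  imports "HOL-Analysis.Analysis"
begin

text \<open>A (real) Frechet space whose topology is induced by a translation-invariant
metric: the type is a complete metric space and a real vector space, the metric is
translation invariant, scalar multiplication is jointly continuous, and the space is
locally convex. (Complex Frechet spaces are in particular real Frechet spaces.)\<close>

definition frechet_space :: "'a::{real_vector,complete_space} itself \<Rightarrow> bool" where
  "frechet_space _ \<longleftrightarrow>
     (\<forall>x y z::'a. dist (x + z) (y + z) = dist x y) \<and>
     continuous_on UNIV (\<lambda>p::real \<times> 'a. fst p *\<^sub>R snd p) \<and>
     (\<forall>U::'a set. open U \<and> 0 \<in> U \<longrightarrow> (\<exists>V. open V \<and> convex V \<and> 0 \<in> V \<and> V \<subseteq> U))"

definition tvs_bounded :: "'a::{real_vector,topological_space} set \<Rightarrow> bool" where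
  "tvs_bounded S \<longleftrightarrow>
     (\<forall>U. open U \<and> 0 \<in> U \<longrightarrow> (\<exists>r>0. \<forall>z::real. \<bar>z\<bar> \<ge> r \<longrightarrow> S \<subseteq> (\<lambda>u. z *\<^sub>R u) ` U))"

definition power_bounded :: "('a::{real_vector,topological_space} \<Rightarrow> 'a) \<Rightarrow> bool" where
  "power_bounded T \<longleftrightarrow> (\<forall>x. tvs_bounded (range (\<lambda>n. (T ^^ n) x)))"

definition Lset :: "('a::topological_space \<Rightarrow> 'a) \<Rightarrow> (nat \<Rightarrow> nat) \<Rightarrow> 'a set" where
  "Lset T \<omega> = {x. (\<lambda>n. (T ^^ \<omega> n) x) \<longlonglongrightarrow> x}"

definition pos_strict_seq :: "(nat \<Rightarrow> nat) \<Rightarrow> bool" where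
  "pos_strict_seq \<omega> \<longleftrightarrow> strict_mono \<omega> \<and> (\<forall>n. \<omega> n > 0)"

definition Rec :: "('a::topological_space \<Rightarrow> 'a) \<Rightarrow> 'a set" where
  "Rec T = {x. \<exists>\<omega>. pos_strict_seq \<omega> \<and> x \<in> Lset T \<omega>}"

definition recurrent :: "('a::topological_space \<Rightarrow> 'a) \<Rightarrow> bool" where
  "recurrent T \<longleftrightarrow> closure (Rec T) = UNIV"

definition Cfrak :: "('a::{zero,topological_space} \<Rightarrow> 'a) \<Rightarrow> (nat \<Rightarrow> nat) set" where
  "Cfrak T = {\<omega>. pos_strict_seq \<omega> \<and> (\<exists>x. x \<noteq> 0 \<and> x \<in> Lset T \<omega>)}"

definition Hr :: "('a::{zero,topological_space} \<Rightarrow> 'a) \<Rightarrow> 'a set" where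
  "Hr T = {x \<in> Rec T. \<forall>\<omega>\<in>Cfrak T. x \<in> Lset T \<omega> \<longrightarrow> closure (Lset T \<omega>) = UNIV}"

definition hyper_recurrent :: "('a::{zero,topological_space} \<Rightarrow> 'a) \<Rightarrow> bool" where
  "hyper_recurrent T \<longleftrightarrow> recurrent T \<and> Hr T \<noteq> {}"

definition dT_star :: "('a::metric_space \<Rightarrow> 'a) \<Rightarrow> 'a \<Rightarrow> 'a \<Rightarrow> real" where
  "dT_star T x y = (SUP l. dist ((T ^^ l) x) ((T ^^ l) y))"

end

theory Submission
  imports Defs
begin

text \<open>Power-boundedness makes the iterates \<open>T\<^sup>n\<close> equicontinuous (Banach-Steinhaus, via
Baire). Recurrence then lets one push bounds on the tail of an orbit back to its start: if
\<open>z\<close> is recurrent and close to \<open>w\<close>, then \<open>z\<close> is a limit of points \<open>T\<^sup>n z\<close> which stay close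
to the tail of the orbit of \<open>w\<close>. In particular the first term of the supremum defining
\<open>d\<^sub>T\<^sup>*(x, y)\<close> is dominated by the later ones, which gives the isometry. Moreover \<open>T\<close> is
bounded below, hence injective with closed range, and its range is dense because it contains
the recurrent vectors; so \<open>T\<close> is bijective and the iterates of \<open>T\<^sup>-\<^sup>1\<close> are equicontinuous as
well. Equicontinuity of both families gives \<open>T\<^bsup>\<omega>\<^sub>n\<^esup> x \<rightarrow> x\<close> iff \<open>T\<^bsup>-\<omega>\<^sub>n\<^esup> x \<rightarrow> x\<close>, so all
recurrence notions coincide for \<open>T\<close> and \<open>T\<^sup>-\<^sup>1\<close>.\<close>

definition fnorm :: "'a::{zero,metric_space} \<Rightarrow> real" where
  "fnorm x = dist x 0"

definition equicontinuous_iterates :: "('a::{zero,metric_space} \<Rightarrow> 'a) \<Rightarrow> bool" where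
  "equicontinuous_iterates T \<longleftrightarrow>
     (\<forall>e>0. \<exists>d>0. \<forall>w. fnorm w < d \<longrightarrow> (\<forall>n. fnorm ((T ^^ n) w) \<le> e))"

lemma equicontinuous_iteratesD:
  assumes "equicontinuous_iterates T" and "e > 0"
  obtains d where "d > 0" and "\<And>w n. fnorm w < d \<Longrightarrow> fnorm ((T ^^ n) w) \<le> e"
  using assms unfolding equicontinuous_iterates_def by blast

lemma tendsto_iterates_0:
  assumes "equicontinuous_iterates T" and "(w \<longlongrightarrow> 0) F"
  shows "((\<lambda>i. (T ^^ k i) (w i)) \<longlongrightarrow> 0) F"
proof (rule tendstoI)
  fix e :: real
  assume "e > 0"
  then obtain d where "d > 0" and d: "\<And>w n. fnorm w < d \<Longrightarrow> fnorm ((T ^^ n) w) \<le> e / 2"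
    using equicontinuous_iteratesD[OF assms(1), of "e / 2"] by auto
  from tendstoD[OF assms(2) \<open>d > 0\<close>] show "\<forall>\<^sub>F i in F. dist ((T ^^ k i) (w i)) 0 < e"
  proof eventually_elim
    case (elim i)
    then show ?case
      using d[of "w i" "k i"] \<open>e > 0\<close> by (simp add: fnorm_def)
  qed
qed

lemma linear_funpow:
  fixes T :: "'a::real_vector \<Rightarrow> 'a"
  shows "linear T \<Longrightarrow> linear (T ^^ n)"
  by (induction n) (simp_all add: linear_id linear_compose)

lemma continuous_on_funpow:
  fixes T :: "'a::topological_space \<Rightarrow> 'a"
  assumes "continuous_on UNIV T"
  shows "continuous_on UNIV (T ^^ n)"
  by (induction n) (auto intro: continuous_on_compose2[OF assms])

lemma bij_linear_imp_inv_linear: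
  fixes T :: "'a::real_vector \<Rightarrow> 'b::real_vector"
  assumes "linear T" and "bij T"
  shows "linear (inv T)"
proof (rule linearI)
  have inv: "inv T (T x) = x" "T (inv T y) = y" for x y
    using assms(2) by (simp_all add: bij_is_inj bij_is_surj surj_f_inv_f)
  show "inv T (x + y) = inv T x + inv T y" for x y
    by (metis inv linear_add[OF assms(1)])
  show "inv T (c *\<^sub>R x) = c *\<^sub>R inv T x" for c x
    by (metis inv linear_cmul[OF assms(1)])
qed

lemma closed_cover_has_interior:
  fixes C :: "nat \<Rightarrow> 'a::complete_space set"
  assumes "\<And>n. closed (C n)" and "\<Union>(range C) = UNIV"
  shows "\<exists>n. interior (C n) \<noteq> {}"
proof (rule ccontr)
  assume "\<nexists>n. interior (C n) \<noteq> {}"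
  then have "euclidean interior_of \<Union>(range C) = {}"
    using assms(1) completely_metrizable_space_euclidean
    by (intro Baire_category_alt) auto
  then show False
    using assms(2) by simp
qed

lemma Rec_subset_closure_range:
  fixes T :: "'a::first_countable_topology \<Rightarrow> 'a"
  shows "Rec T \<subseteq> closure (range T)"
proof
  fix z assume "z \<in> Rec T"
  then obtain \<omega> where \<omega>: "pos_strict_seq \<omega>" and lim: "(\<lambda>n. (T ^^ \<omega> n) z) \<longlonglongrightarrow> z"
    by (auto simp: Rec_def Lset_def)
  have "(T ^^ \<omega> n) z \<in> range T" for n
    using \<omega> gr0_implies_Suc[of "\<omega> n"] by (auto simp: pos_strict_seq_def)
  with lim show "z \<in> closure (range T)"
    unfolding closure_sequential by (intro exI[of _ "\<lambda>n. (T ^^ \<omega> n) z"]) blast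
qed

locale metric_tvs_operator =
  fixes T :: "'a::{real_vector,complete_space} \<Rightarrow> 'a"
  assumes dist_add_right_cancel: "\<And>x y z::'a. dist (x + z) (y + z) = dist x y"
    and continuous_scaleR: "continuous_on UNIV (\<lambda>p::real \<times> 'a. fst p *\<^sub>R snd p)"
    and linear: "linear T"
begin

lemma dist_eq_fnorm_diff: "dist (x::'a) y = fnorm (x - y)"
proof -
  have "dist (x - y + y) (0 + y) = dist (x - y) 0"
    by (rule dist_add_right_cancel)
  then show ?thesis
    by (simp add: fnorm_def)
qed

lemma fnorm_nonneg: "0 \<le> fnorm (x::'a)"
  by (simp add: fnorm_def)

lemma fnorm_eq_0_iff: "fnorm (x::'a) = 0 \<longleftrightarrow> x = 0"
  by (simp add: fnorm_def)

lemma fnorm_minus: "fnorm (- x::'a) = fnorm x"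
  using dist_eq_fnorm_diff[of 0 x] by (simp add: fnorm_def dist_commute)

lemma fnorm_diff_commute: "fnorm (x - y::'a) = fnorm (y - x)"
  by (metis fnorm_minus minus_diff_eq)

lemma fnorm_add_le: "fnorm (x + y::'a) \<le> fnorm x + fnorm y"
  using dist_triangle[of "x + y" 0 y] dist_eq_fnorm_diff[of "x + y" y]
  by (simp add: fnorm_def dist_commute)

lemma fnorm_diff_le: "fnorm (x - y::'a) \<le> fnorm x + fnorm y"
  using fnorm_add_le[of x "- y"] by (simp add: fnorm_minus)

lemma fnorm_scaleR_of_nat_le: "fnorm (real n *\<^sub>R x::'a) \<le> real n * fnorm x"
proof (induction n)
  case (Suc n)
  have "fnorm (real (Suc n) *\<^sub>R x) \<le> fnorm (real n *\<^sub>R x) + fnorm x"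
    using fnorm_add_le[of "real n *\<^sub>R x" x] by (simp add: algebra_simps)
  with Suc show ?case
    by (simp add: algebra_simps)
qed (simp add: fnorm_def)

lemma continuous_on_scaleR_right: "continuous_on UNIV (\<lambda>x::'a. c *\<^sub>R x)"
  using continuous_on_compose2[OF continuous_scaleR continuous_on_Pair[OF continuous_on_const continuous_on_id]]
  by simp

lemma fnorm_scaleR_small:
  assumes "e > 0"
  obtains h where "h > 0" and "\<And>t. \<bar>t\<bar> < h \<Longrightarrow> fnorm (t *\<^sub>R x::'a) < e"
proof -
  have "continuous_on UNIV (\<lambda>t::real. t *\<^sub>R x)"
    using continuous_on_compose2[OF continuous_scaleR continuous_on_Pair[OF continuous_on_id continuous_on_const]]
    by simp
  then obtain h where "h > 0" "\<forall>t. dist t 0 < h \<longrightarrow> dist (t *\<^sub>R x) (0 *\<^sub>R x) < e"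
    using assms unfolding continuous_on_iff by (meson UNIV_I)
  with that show ?thesis
    by (auto simp: fnorm_def)
qed

lemmas linear_iterate = linear_funpow[OF linear]

lemma tendsto_iff_diff_tendsto_0:
  shows "(f \<longlongrightarrow> l) F \<longleftrightarrow> ((\<lambda>i. f i - l) \<longlongrightarrow> (0::'a)) F"
    and "(f \<longlongrightarrow> l) F \<longleftrightarrow> ((\<lambda>i. l - f i) \<longlongrightarrow> (0::'a)) F"
  by (simp_all add: tendsto_dist_iff[of f] tendsto_dist_iff[of "\<lambda>i. f i - l"]
      tendsto_dist_iff[of "\<lambda>i. l - f i"] dist_eq_fnorm_diff fnorm_diff_commute)

lemma equicontinuous_iterates_imp_continuous:
  assumes "equicontinuous_iterates T"
  shows "continuous_on UNIV T"
  unfolding continuous_on_iff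
proof (intro ballI allI impI)
  fix x and e :: real
  assume "e > 0"
  then obtain d where "d > 0" and d: "\<And>w n. fnorm w < d \<Longrightarrow> fnorm ((T ^^ n) w) \<le> e / 2"
    using equicontinuous_iteratesD[OF assms, of "e / 2"] by auto
  have "dist (T y) (T x) < e" if "dist y x < d" for y
    using d[of "y - x" 1] that \<open>e > 0\<close> by (simp add: dist_eq_fnorm_diff linear_diff[OF linear])
  with \<open>d > 0\<close> show "\<exists>d>0. \<forall>y\<in>UNIV. dist y x < d \<longrightarrow> dist (T y) (T x) < e"
    by blast
qed

lemma equicontinuous_iterates_orbit_bounded:
  assumes "equicontinuous_iterates T"
  obtains c where "\<And>n. fnorm ((T ^^ n) x) \<le> c"
proof -
  obtain d where "d > 0" and d: "\<And>w n. fnorm w < d \<Longrightarrow> fnorm ((T ^^ n) w) \<le> 1"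
    using equicontinuous_iteratesD[OF assms, of 1] by auto
  obtain h where "h > 0" and h: "\<And>t. \<bar>t\<bar> < h \<Longrightarrow> fnorm (t *\<^sub>R x) < d"
    using fnorm_scaleR_small[OF \<open>d > 0\<close>] by blast
  obtain m where m: "inverse (real (Suc m)) < h"
    using reals_Archimedean[OF \<open>h > 0\<close>] by blast
  have "fnorm ((T ^^ n) x) \<le> real (Suc m)" for n
  proof -
    have "(T ^^ n) x = real (Suc m) *\<^sub>R (T ^^ n) (inverse (real (Suc m)) *\<^sub>R x)"
      by (simp add: linear_cmul[OF linear_iterate])
    then have "fnorm ((T ^^ n) x) \<le> real (Suc m) * fnorm ((T ^^ n) (inverse (real (Suc m)) *\<^sub>R x))"
      by (metis fnorm_scaleR_of_nat_le)
    also have "\<dots> \<le> real (Suc m)"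
      using d[OF h] m by simp
    finally show ?thesis .
  qed
  with that show ?thesis .
qed

lemma equicontinuous_iterates_imp_power_bounded:
  assumes "equicontinuous_iterates T"
  shows "power_bounded T"
  unfolding power_bounded_def tvs_bounded_def
proof (intro allI impI)
  fix x :: 'a and U :: "'a set"
  assume "open U \<and> 0 \<in> U"
  then obtain e where "e > 0" and U: "ball 0 e \<subseteq> U"
    by (meson open_contains_ball)
  obtain d where "d > 0" and d: "\<And>w n. fnorm w < d \<Longrightarrow> fnorm ((T ^^ n) w) \<le> e / 2"
    using equicontinuous_iteratesD[OF assms, of "e / 2"] \<open>e > 0\<close> by auto
  obtain h where "h > 0" and h: "\<And>t. \<bar>t\<bar> < h \<Longrightarrow> fnorm (t *\<^sub>R x) < d"
    using fnorm_scaleR_small[OF \<open>d > 0\<close>] by blast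
  have "(T ^^ n) x \<in> (\<lambda>u. z *\<^sub>R u) ` U" if z: "2 / h \<le> \<bar>z\<bar>" for z n
  proof -
    have "2 / h > 0"
      using \<open>h > 0\<close> by simp
    with z have "\<bar>z\<bar> > 0"
      by linarith
    have "\<bar>inverse z\<bar> \<le> h / 2"
      using \<open>h > 0\<close> z \<open>\<bar>z\<bar> > 0\<close> by (simp add: field_simps)
    then have "fnorm ((T ^^ n) (inverse z *\<^sub>R x)) \<le> e / 2"
      using \<open>h > 0\<close> by (intro d h) simp
    then have "(T ^^ n) (inverse z *\<^sub>R x) \<in> U"
      using U \<open>e > 0\<close> by (auto simp: fnorm_def dist_commute)
    moreover have "(T ^^ n) x = z *\<^sub>R (T ^^ n) (inverse z *\<^sub>R x)"
      using \<open>\<bar>z\<bar> > 0\<close> by (simp add: linear_cmul[OF linear_iterate])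
    ultimately show ?thesis
      by blast
  qed
  with \<open>h > 0\<close> show "\<exists>r>0. \<forall>z. r \<le> \<bar>z\<bar> \<longrightarrow> range (\<lambda>n. (T ^^ n) x) \<subseteq> (\<lambda>u. z *\<^sub>R u) ` U"
    by (intro exI[of _ "2 / h"]) auto
qed

lemma Lset_subset_of_funpow_right_inverse:
  assumes "equicontinuous_iterates T" and inverse: "\<And>n x. (T ^^ n) ((S ^^ n) x) = x"
  shows "Lset S \<omega> \<subseteq> Lset T \<omega>"
proof
  fix x
  assume "x \<in> Lset S \<omega>"
  then have "((\<lambda>n. (S ^^ \<omega> n) x - x) \<longlongrightarrow> 0) sequentially"
    unfolding Lset_def mem_Collect_eq by (rule tendsto_iff_diff_tendsto_0(1)[THEN iffD1])
  then have "((\<lambda>n. (T ^^ \<omega> n) ((S ^^ \<omega> n) x - x)) \<longlongrightarrow> 0) sequentially"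
    by (rule tendsto_iterates_0[OF assms(1)])
  then have "((\<lambda>n. x - (T ^^ \<omega> n) x) \<longlongrightarrow> 0) sequentially"
    by (simp add: linear_diff[OF linear_iterate] inverse)
  then show "x \<in> Lset T \<omega>"
    unfolding Lset_def mem_Collect_eq by (rule tendsto_iff_diff_tendsto_0(2)[THEN iffD2])
qed

lemma closed_range_if_bounded_below:
  assumes continuous: "continuous_on UNIV T"
    and below: "\<And>e. e > 0 \<Longrightarrow> \<exists>d>0. \<forall>w. fnorm (T w) < d \<longrightarrow> fnorm w \<le> e"
  shows "closed (range T)"
  unfolding closed_sequential_limits
proof (intro allI impI, elim conjE)
  fix s y
  assume "\<forall>n. s n \<in> range T" and "s \<longlonglongrightarrow> y"
  define x where "x n = inv T (s n)" for n
  have x: "T (x n) = s n" for n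
    using \<open>\<forall>n. s n \<in> range T\<close> by (simp add: x_def f_inv_into_f)
  have "Cauchy x"
    unfolding Cauchy_def
  proof (intro allI impI)
    fix e :: real
    assume "e > 0"
    then obtain d where "d > 0" and d: "\<And>w. fnorm (T w) < d \<Longrightarrow> fnorm w \<le> e / 2"
      using below[of "e / 2"] by auto
    obtain M where M: "\<forall>m\<ge>M. \<forall>n\<ge>M. dist (s m) (s n) < d"
      using LIMSEQ_imp_Cauchy[OF \<open>s \<longlonglongrightarrow> y\<close>] \<open>d > 0\<close> unfolding Cauchy_def by blast
    have "dist (x m) (x n) < e" if "M \<le> m" and "M \<le> n" for m n
    proof -
      have "fnorm (T (x m - x n)) < d"
        using M that by (simp add: dist_eq_fnorm_diff linear_diff[OF linear] x)
      then show ?thesis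
        using d \<open>e > 0\<close> by (fastforce simp: dist_eq_fnorm_diff)
    qed
    then show "\<exists>M. \<forall>m\<ge>M. \<forall>n\<ge>M. dist (x m) (x n) < e"
      by blast
  qed
  then obtain a where "x \<longlonglongrightarrow> a"
    using Cauchy_convergent_iff convergent_def by blast
  then have "s \<longlonglongrightarrow> T a"
    using continuous_on_tendsto_compose[OF continuous] x by fastforce
  with \<open>s \<longlonglongrightarrow> y\<close> show "y \<in> range T"
    using LIMSEQ_unique by blast
qed

lemma dT_star_eq_SUP_fnorm: "dT_star T x y = (SUP n. fnorm ((T ^^ n) (x - y)))"
  by (simp add: dT_star_def dist_eq_fnorm_diff linear_diff[OF linear_iterate])

end

locale power_bounded_operator = metric_tvs_operator +
  assumes continuous: "continuous_on UNIV T"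
    and power_bounded: "power_bounded T"
begin

lemma orbit_scaleR_small:
  assumes "e > 0"
  obtains k where "\<And>n. fnorm ((T ^^ n) (inverse (real (Suc k)) *\<^sub>R x)) \<le> e"
proof -
  have "tvs_bounded (range (\<lambda>n. (T ^^ n) x))"
    using power_bounded by (simp add: power_bounded_def)
  moreover have "open (ball (0::'a) e) \<and> 0 \<in> ball 0 e"
    using assms by simp
  ultimately obtain r where r: "\<forall>z. r \<le> \<bar>z\<bar> \<longrightarrow> range (\<lambda>n. (T ^^ n) x) \<subseteq> (\<lambda>u. z *\<^sub>R u) ` ball 0 e"
    unfolding tvs_bounded_def by (metis (no_types, lifting))
  obtain k where "r \<le> real k"
    using real_arch_simple by blast
  then have "r \<le> real (Suc k)"
    by simp
  have "fnorm ((T ^^ n) (inverse (real (Suc k)) *\<^sub>R x)) \<le> e" for n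
  proof -
    have "range (\<lambda>n. (T ^^ n) x) \<subseteq> (\<lambda>u. real (Suc k) *\<^sub>R u) ` ball 0 e"
      using r[rule_format, of "real (Suc k)"] \<open>r \<le> real (Suc k)\<close> by simp
    then have "(T ^^ n) x \<in> (\<lambda>u. real (Suc k) *\<^sub>R u) ` ball 0 e"
      by (blast intro: rangeI)
    then obtain u where "u \<in> ball 0 e" and u: "(T ^^ n) x = real (Suc k) *\<^sub>R u"
      by blast
    have "(T ^^ n) (inverse (real (Suc k)) *\<^sub>R x) = u"
      by (simp add: linear_cmul[OF linear_iterate] u)
    with \<open>u \<in> ball 0 e\<close> show ?thesis
      by (simp add: fnorm_def dist_commute)
  qed
  with that show ?thesis .
qed

text \<open>Banach-Steinhaus: the closed sets \<open>C k\<close> cover the space, so one of them contains a ball,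
and differences of points of that ball fill a neighbourhood of \<open>0\<close>.\<close>

lemma equicontinuous_iterates: "equicontinuous_iterates T"
  unfolding equicontinuous_iterates_def
proof (intro allI impI)
  fix e :: real
  assume "e > 0"
  define C where "C k = {x. \<forall>n. fnorm ((T ^^ n) (inverse (real (Suc k)) *\<^sub>R x)) \<le> e / 2}" for k
  have "closed (C k)" for k
    unfolding C_def fnorm_def
    by (intro closed_Collect_all closed_Collect_le continuous_on_dist continuous_on_const
        continuous_on_compose2[OF continuous_on_funpow[OF continuous] continuous_on_scaleR_right]) auto
  moreover have "\<Union>(range C) = UNIV"
  proof (intro set_eqI iffI)
    fix x
    obtain k where "\<And>n. fnorm ((T ^^ n) (inverse (real (Suc k)) *\<^sub>R x)) \<le> e / 2"
      using orbit_scaleR_small[of "e / 2" x] \<open>e > 0\<close> by auto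
    then show "x \<in> \<Union>(range C)"
      by (auto simp: C_def)
  qed simp
  ultimately obtain k a where "a \<in> interior (C k)"
    using closed_cover_has_interior by blast
  then obtain h where "h > 0" and ball: "ball a h \<subseteq> C k"
    by (auto simp: mem_interior)
  define m where "m = real (Suc k)"
  have "m > 0"
    by (simp add: m_def)
  have "fnorm ((T ^^ n) w) \<le> e" if w: "fnorm w < h / m" for w n
  proof -
    have "fnorm (m *\<^sub>R w) < h"
      using fnorm_scaleR_of_nat_le[of "Suc k" w] w \<open>m > 0\<close> by (simp add: m_def field_simps)
    then have "a + m *\<^sub>R w \<in> C k" and "a \<in> C k"
      using ball \<open>h > 0\<close> by (auto simp: dist_eq_fnorm_diff fnorm_minus)
    then have 1: "fnorm ((T ^^ n) (inverse m *\<^sub>R (a + m *\<^sub>R w))) \<le> e / 2"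
      and 2: "fnorm ((T ^^ n) (inverse m *\<^sub>R a)) \<le> e / 2"
      by (auto simp: C_def m_def)
    have "w = inverse m *\<^sub>R (a + m *\<^sub>R w) - inverse m *\<^sub>R a"
      using \<open>m > 0\<close> by (simp add: scaleR_add_right)
    then have "(T ^^ n) w = (T ^^ n) (inverse m *\<^sub>R (a + m *\<^sub>R w)) - (T ^^ n) (inverse m *\<^sub>R a)"
      by (metis linear_diff[OF linear_iterate])
    then have "fnorm ((T ^^ n) w)
        \<le> fnorm ((T ^^ n) (inverse m *\<^sub>R (a + m *\<^sub>R w))) + fnorm ((T ^^ n) (inverse m *\<^sub>R a))"
      by (simp only: fnorm_diff_le)
    with 1 2 show ?thesis
      by linarith
  qed
  moreover have "h / m > 0"
    using \<open>h > 0\<close> \<open>m > 0\<close> by simp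
  ultimately show "\<exists>d>0. \<forall>w. fnorm w < d \<longrightarrow> (\<forall>n. fnorm ((T ^^ n) w) \<le> e)"
    by blast
qed

lemma recurrent_fnorm_le_orbit_tail:
  assumes "recurrent T" and tail: "\<And>n. 0 < n \<Longrightarrow> fnorm ((T ^^ n) w) \<le> c"
  shows "fnorm w \<le> c"
proof (rule field_le_epsilon)
  fix e :: real
  assume "e > 0"
  then obtain d where "d > 0" and d: "\<And>v n. fnorm v < d \<Longrightarrow> fnorm ((T ^^ n) v) \<le> e / 2"
    using equicontinuous_iteratesD[OF equicontinuous_iterates, of "e / 2"] by auto
  have "w \<in> closure (Rec T)"
    using \<open>recurrent T\<close> by (simp add: recurrent_def)
  then obtain z where "z \<in> Rec T" and "dist z w < d"
    using \<open>d > 0\<close> by (auto simp: closure_approachable)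
  then obtain \<omega> where \<omega>: "pos_strict_seq \<omega>" and lim: "(\<lambda>n. (T ^^ \<omega> n) z) \<longlonglongrightarrow> z"
    by (auto simp: Rec_def Lset_def)
  have near: "fnorm ((T ^^ n) (z - w)) \<le> e / 2" for n
    using d \<open>dist z w < d\<close> by (simp add: dist_eq_fnorm_diff)
  have "fnorm ((T ^^ \<omega> n) z) \<le> c + e / 2" for n
  proof -
    have "(T ^^ \<omega> n) z = (T ^^ \<omega> n) w + (T ^^ \<omega> n) (z - w)"
      by (simp add: linear_diff[OF linear_iterate])
    then have "fnorm ((T ^^ \<omega> n) z) \<le> fnorm ((T ^^ \<omega> n) w) + fnorm ((T ^^ \<omega> n) (z - w))"
      by (simp only: fnorm_add_le)
    moreover have "fnorm ((T ^^ \<omega> n) w) \<le> c"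
      using \<omega> tail by (simp add: pos_strict_seq_def)
    ultimately show ?thesis
      using near[of "\<omega> n"] by linarith
  qed
  moreover have "(\<lambda>n. fnorm ((T ^^ \<omega> n) z)) \<longlonglongrightarrow> fnorm z"
    unfolding fnorm_def by (intro tendsto_intros lim)
  ultimately have "fnorm z \<le> c + e / 2"
    by (intro LIMSEQ_le_const2) auto
  moreover have "fnorm w \<le> fnorm z + fnorm (z - w)"
    using fnorm_diff_le[of z "z - w"] by simp
  ultimately show "fnorm w \<le> c + e"
    using near[of 0] by simp
qed

lemma recurrent_fnorm_orbit_le_of_tail:
  assumes "recurrent T" and "\<And>n. k \<le> n \<Longrightarrow> fnorm ((T ^^ n) w) \<le> c"
  shows "fnorm ((T ^^ n) w) \<le> c"
  using assms(2)
proof (induction k arbitrary: n)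
  case (Suc k)
  have "fnorm ((T ^^ k) w) \<le> c"
  proof (rule recurrent_fnorm_le_orbit_tail[OF assms(1)])
    fix j :: nat
    assume "0 < j"
    then show "fnorm ((T ^^ j) ((T ^^ k) w)) \<le> c"
      using Suc.prems[of "j + k"] by (simp add: funpow_add)
  qed
  show ?case
  proof (rule Suc.IH)
    fix m
    assume "k \<le> m"
    with Suc.prems \<open>fnorm ((T ^^ k) w) \<le> c\<close> show "fnorm ((T ^^ m) w) \<le> c"
      by (cases "m = k") auto
  qed
qed simp

lemma recurrent_bounded_below:
  assumes "recurrent T" and "e > 0"
  shows "\<exists>d>0. \<forall>w. fnorm (T w) < d \<longrightarrow> fnorm w \<le> e"
proof -
  obtain d where "d > 0" and d: "\<And>v n. fnorm v < d \<Longrightarrow> fnorm ((T ^^ n) v) \<le> e"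
    using equicontinuous_iteratesD[OF equicontinuous_iterates \<open>e > 0\<close>] by blast
  have "fnorm w \<le> e" if "fnorm (T w) < d" for w
  proof (rule recurrent_fnorm_le_orbit_tail[OF assms(1)])
    fix n :: nat
    assume "0 < n"
    then have "(T ^^ n) w = (T ^^ (n - 1)) (T w)"
      by (metis Suc_diff_1 funpow_Suc_right o_apply)
    then show "fnorm ((T ^^ n) w) \<le> e"
      using d[OF that] by simp
  qed
  with \<open>d > 0\<close> show ?thesis
    by blast
qed

lemma recurrent_inj:
  assumes "recurrent T"
  shows "inj T"
proof (rule injI)
  fix x y
  assume "T x = T y"
  then have "fnorm (T (x - y)) = 0"
    by (simp add: linear_diff[OF linear] fnorm_eq_0_iff)
  have "fnorm (x - y) \<le> 0 + e" if "e > 0" for e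
  proof -
    obtain d where "d > 0" and "\<And>w. fnorm (T w) < d \<Longrightarrow> fnorm w \<le> e"
      using recurrent_bounded_below[OF assms \<open>e > 0\<close>] by blast
    with \<open>fnorm (T (x - y)) = 0\<close> show ?thesis
      by simp
  qed
  then have "fnorm (x - y) \<le> 0"
    by (rule field_le_epsilon)
  then show "x = y"
    using fnorm_nonneg[of "x - y"] by (simp add: fnorm_eq_0_iff)
qed

lemma recurrent_surj:
  assumes "recurrent T"
  shows "surj T"
proof -
  have "closed (range T)"
    using continuous recurrent_bounded_below[OF assms] by (rule closed_range_if_bounded_below)
  then have "closure (Rec T) \<subseteq> range T"
    using Rec_subset_closure_range[of T] by (simp add: closure_minimal)
  with assms show ?thesis
    by (auto simp: recurrent_def)
qed

lemma recurrent_bij: "recurrent T \<Longrightarrow> bij T"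
  by (simp add: bij_def recurrent_inj recurrent_surj)

lemma recurrent_funpow_inv_right: "recurrent T \<Longrightarrow> (T ^^ n) ((inv T ^^ n) x) = x"
  using fn_o_inv_fn_is_id[OF recurrent_bij, of n] by (metis comp_apply)

lemma recurrent_funpow_inv_left: "recurrent T \<Longrightarrow> (inv T ^^ n) ((T ^^ n) x) = x"
  using inv_fn_o_fn_is_id[OF recurrent_bij, of n] by (metis comp_apply)

lemma recurrent_inv_metric_tvs_operator:
  assumes "recurrent T"
  shows "metric_tvs_operator (inv T)"
  using dist_add_right_cancel continuous_scaleR bij_linear_imp_inv_linear[OF linear recurrent_bij[OF assms]]
  by (rule metric_tvs_operator.intro)

lemma recurrent_equicontinuous_iterates_inv:
  assumes "recurrent T"
  shows "equicontinuous_iterates (inv T)"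
  unfolding equicontinuous_iterates_def
proof (intro allI impI)
  fix e :: real
  assume "e > 0"
  then obtain d where "d > 0" and d: "\<And>v n. fnorm v < d \<Longrightarrow> fnorm ((T ^^ n) v) \<le> e"
    using equicontinuous_iteratesD[OF equicontinuous_iterates \<open>e > 0\<close>] by blast
  have "fnorm ((inv T ^^ k) w) \<le> e" if "fnorm w < d" for w k
  proof -
    have "fnorm ((T ^^ n) ((inv T ^^ k) w)) \<le> e" if "k \<le> n" for n
    proof -
      have "T ^^ n = T ^^ (n - k) \<circ> T ^^ k"
        using funpow_add[of "n - k" k T] that by simp
      then have "(T ^^ n) ((inv T ^^ k) w) = (T ^^ (n - k)) w"
        by (simp only: comp_apply recurrent_funpow_inv_right[OF assms])
      then show ?thesis
        using d[OF \<open>fnorm w < d\<close>] by simp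
    qed
    then have "fnorm ((T ^^ 0) ((inv T ^^ k) w)) \<le> e"
      by (rule recurrent_fnorm_orbit_le_of_tail[OF assms])
    then show ?thesis
      by simp
  qed
  with \<open>d > 0\<close> show "\<exists>d>0. \<forall>w. fnorm w < d \<longrightarrow> (\<forall>k. fnorm ((inv T ^^ k) w) \<le> e)"
    by blast
qed

lemma recurrent_Lset_inv:
  assumes "recurrent T"
  shows "Lset (inv T) \<omega> = Lset T \<omega>"
proof
  interpret inv: metric_tvs_operator "inv T"
    by (rule recurrent_inv_metric_tvs_operator[OF assms])
  show "Lset (inv T) \<omega> \<subseteq> Lset T \<omega>"
    using equicontinuous_iterates recurrent_funpow_inv_right[OF assms]
    by (rule Lset_subset_of_funpow_right_inverse)
  show "Lset T \<omega> \<subseteq> Lset (inv T) \<omega>"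
    using recurrent_equicontinuous_iterates_inv[OF assms] recurrent_funpow_inv_left[OF assms]
    by (rule inv.Lset_subset_of_funpow_right_inverse)
qed

lemma recurrent_inv: "recurrent T \<Longrightarrow> recurrent (inv T)"
  by (simp add: recurrent_def Rec_def recurrent_Lset_inv)

lemma recurrent_Hr_inv: "recurrent T \<Longrightarrow> Hr (inv T) = Hr T"
  by (simp add: Hr_def Cfrak_def Rec_def recurrent_Lset_inv)

lemma recurrent_dT_star_isometry:
  assumes "recurrent T"
  shows "dT_star T (T x) (T y) = dT_star T x y"
proof -
  define f where "f n = fnorm ((T ^^ n) (x - y))" for n
  obtain c where "\<And>n. f n \<le> c"
    unfolding f_def using equicontinuous_iterates_orbit_bounded[OF equicontinuous_iterates] by blast
  then have bounded: "bdd_above (range f)" "bdd_above (range (\<lambda>n. f (Suc n)))"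
    by (auto intro!: bdd_aboveI2)
  have "fnorm (x - y) \<le> (SUP n. f (Suc n))"
  proof (rule recurrent_fnorm_le_orbit_tail[OF assms])
    fix n :: nat
    assume "0 < n"
    then show "fnorm ((T ^^ n) (x - y)) \<le> (SUP n. f (Suc n))"
      using cSUP_upper[OF _ bounded(2), of "n - 1"] by (simp add: f_def)
  qed
  then have "f 0 \<le> (SUP n. f (Suc n))"
    by (simp add: f_def)
  then have "f n \<le> (SUP n. f (Suc n))" for n
    using cSUP_upper[OF _ bounded(2)] by (cases n) auto
  then have "(SUP n. f n) \<le> (SUP n. f (Suc n))"
    by (intro cSUP_least) auto
  moreover have "(SUP n. f (Suc n)) \<le> (SUP n. f n)"
    using cSUP_upper[OF _ bounded(1)] by (intro cSUP_least) auto
  ultimately have "(SUP n. f n) = (SUP n. f (Suc n))"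
    by (rule order.antisym)
  moreover have "T x - T y = T (x - y)"
    by (simp add: linear_diff[OF linear])
  ultimately show ?thesis
    by (simp add: dT_star_eq_SUP_fnorm f_def funpow_swap1)
qed

end

theorem proposition5p1:
  fixes T :: "'a::{real_vector,complete_space} \<Rightarrow> 'a"
  assumes "frechet_space TYPE('a)"
    and "linear T" and "continuous_on UNIV T"
    and "power_bounded T"
  shows "(recurrent T \<longrightarrow>
            bij T \<and> linear (inv T) \<and> continuous_on UNIV (inv T) \<and>
            power_bounded (inv T) \<and> recurrent (inv T) \<and>
            (\<forall>x y. dT_star T (T x) (T y) = dT_star T x y))
       \<and> (hyper_recurrent T \<longrightarrow> Hr T = Hr (inv T) \<and> hyper_recurrent (inv T))"
proof -
  interpret power_bounded_operator T
    using assms by (auto simp: frechet_space_def power_bounded_operator_def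
        power_bounded_operator_axioms_def metric_tvs_operator_def)
  have inverse: "linear (inv T) \<and> continuous_on UNIV (inv T) \<and> power_bounded (inv T)"
    if "recurrent T"
  proof -
    interpret inv: metric_tvs_operator "inv T"
      by (rule recurrent_inv_metric_tvs_operator[OF that])
    show ?thesis
      using recurrent_equicontinuous_iterates_inv[OF that] inv.linear
      by (simp add: inv.equicontinuous_iterates_imp_continuous inv.equicontinuous_iterates_imp_power_bounded)
  qed
  show ?thesis
    using inverse recurrent_bij recurrent_inv recurrent_dT_star_isometry recurrent_Hr_inv
    by (auto simp: hyper_recurrent_def)
qed

end
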